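(* For every $n$ there are logistic regression instances $Z\in\mathbb{R}^{n\times 2}$, $Y\in\{-1,1\}^n$ such that any coreset of $(Z,Y)$ for logistic regression (any weighted point set whose logistic loss approximates $\mathcal{L}(\beta\mid Z,Y)$ for all $\beta$ within a finite multiplicative factor, whether or not its points are input points) consists of at least $\Omega(n/\log n)$ points.
   Context: The logistic regression negative log-likelihood is $\mathcal{L}(\beta\mid Z,Y)=\sum_{i=1}^n\ln(1+\exp(-Y_iZ_i\beta))$ for $\beta\in\mathbb{R}^d$, where $Z_i$ is the $i$-th row of $Z$. A weighted set $C\in\mathbb{R}^{k\times d}$ with weights $u\in\mathbb{R}^k_{>0}$ evaluates the loss as $\sum_{j=1}^k u_j\ln(1+\exp(c_j\beta))$ where $c_j$ are the rows of $C$ (labels folded into the rows as $c=-Y_iZ_i$). *)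

theory Defs
  imports "HOL-Analysis.Analysis"
begin

definition logistic_loss :: "nat \<Rightarrow> (nat \<Rightarrow> real^2) \<Rightarrow> (nat \<Rightarrow> real) \<Rightarrow> real^2 \<Rightarrow> real" where
  "logistic_loss n Z Y \<beta> = (\<Sum>i<n. ln (1 + exp (- Y i * (Z i \<bullet> \<beta>))))"

text \<open>Weighted point set C (rows C j, j < k) with weights u; labels folded into the rows.\<close>
definition weighted_loss :: "nat \<Rightarrow> (nat \<Rightarrow> real^2) \<Rightarrow> (nat \<Rightarrow> real) \<Rightarrow> real^2 \<Rightarrow> real" where
  "weighted_loss k C u \<beta> = (\<Sum>j<k. u j * ln (1 + exp (C j \<bullet> \<beta>)))"

definition is_coreset :: "nat \<Rightarrow> (nat \<Rightarrow> real^2) \<Rightarrow> (nat \<Rightarrow> real) \<Rightarrow> real \<Rightarrow>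
    nat \<Rightarrow> (nat \<Rightarrow> real^2) \<Rightarrow> (nat \<Rightarrow> real) \<Rightarrow> bool" where
  "is_coreset n Z Y \<Delta> k C u \<longleftrightarrow>
     \<Delta> \<ge> 1 \<and> (\<forall>j<k. u j > 0) \<and>
     (\<forall>\<beta>. logistic_loss n Z Y \<beta> / \<Delta> \<le> weighted_loss k C u \<beta> \<and>
          weighted_loss k C u \<beta> \<le> \<Delta> * logistic_loss n Z Y \<beta>)"

end

theory Submission
  imports Defs "HOL-Computational_Algebra.Polynomial"
begin

text \<open>
  The bound is even linear in n. Put n points c on the parabola (a, a^2 + 1) with 0 \<le> a < 1;
  each of them is the unique maximiser of a linear functional \<beta> \<mapsto> c \<bullet> w whose maximum M is
  negative. Along the ray t w the loss behaves like exp (t M) as t \<rightarrow> \<infinity>, because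
  ln (1 + e^s) is comparable to e^s for s \<le> 0. A coreset must reproduce this exponential rate
  up to a constant factor, which forces one of its points d to satisfy d \<bullet> w = M exactly. A point
  d = (p, q) lies on the supporting line of at most two of the parabola points, since that
  condition is a quadratic equation in the parameter a; hence the coreset has at least n/2 points.
\<close>

definition softplus :: "real \<Rightarrow> real" where
  "softplus s = ln (1 + exp s)"

lemma softplus_pos: "softplus s > 0"
  unfolding softplus_def by (simp add: add_pos_pos)

lemma softplus_mono: "s \<le> t \<Longrightarrow> softplus s \<le> softplus t"
  unfolding softplus_def by (simp add: add_pos_pos)

lemma softplus_le_exp: "softplus s \<le> exp s"
  unfolding softplus_def by (rule ln_add_one_self_le_self) simp

lemma exp_le_two_softplus:
  assumes "s \<le> 0"
  shows "exp s \<le> 2 * softplus s"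
proof -
  let ?x = "exp s"
  have x: "0 < ?x" "?x \<le> 1" "0 < 1 + ?x" using assms by (auto simp: add_pos_pos)
  have "?x / (1 + ?x) \<le> ln (1 + ?x)"
    using ln_le_minus_one[of "1 / (1 + ?x)"] x by (simp add: ln_div field_simps)
  moreover have "?x / 2 \<le> ?x / (1 + ?x)"
    using x by (intro divide_left_mono) auto
  ultimately show ?thesis unfolding softplus_def by linarith
qed

lemma exp_min_le_two_softplus: "exp (min s 0) \<le> 2 * softplus s"
  using exp_le_two_softplus[of "min s 0"] softplus_mono[of "min s 0" s] by linarith

lemma exp_growth_rate_le:
  fixes a b A B :: real
  assumes "A > 0" and growth: "\<And>t. t \<ge> 0 \<Longrightarrow> A * exp (t * a) \<le> B * exp (t * b)"
  shows "a \<le> b"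
proof (rule ccontr)
  assume "\<not> a \<le> b"
  define x where "x = max 0 (B / A)"
  define t where "t = x / (a - b)"
  have "t \<ge> 0" "t * (a - b) = x" using \<open>\<not> a \<le> b\<close> by (auto simp: t_def x_def)
  have "A * exp (t * (a - b)) * exp (t * b) \<le> B * exp (t * b)"
    using growth[OF \<open>t \<ge> 0\<close>] by (simp add: algebra_simps flip: exp_add)
  hence "exp x \<le> B / A"
    using \<open>A > 0\<close> \<open>t * (a - b) = x\<close> by (simp add: field_simps)
  moreover have "B / A < exp x"
    using exp_ge_add_one_self[of x] max.cobounded2[of "B / A" 0] unfolding x_def by linarith
  ultimately show False by simp
qed

lemma sum_softplus_scaled_le:
  assumes "t \<ge> 0" and "\<And>i. i \<in> I \<Longrightarrow> f i \<le> M"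
  shows "(\<Sum>i\<in>I. softplus (t * f i)) \<le> real (card I) * exp (t * M)"
proof -
  have "(\<Sum>i\<in>I. softplus (t * f i)) \<le> (\<Sum>i\<in>I. exp (t * M))"
  proof (rule sum_mono)
    fix i assume "i \<in> I"
    hence "t * f i \<le> t * M" using assms by (simp add: mult_left_mono)
    thus "softplus (t * f i) \<le> exp (t * M)"
      using softplus_le_exp[of "t * f i"] by (simp add: order_trans)
  qed
  thus ?thesis by simp
qed

lemma coreset_point_below_support:
  fixes c d :: "nat \<Rightarrow> 'a::real_inner"
  assumes upper: "\<And>\<beta>. (\<Sum>j<k. u j * softplus (d j \<bullet> \<beta>)) \<le> \<Delta> * (\<Sum>i<n. softplus (c i \<bullet> \<beta>))"
    and u_pos: "\<And>j. j < k \<Longrightarrow> u j > 0" and "\<Delta> \<ge> 0"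
    and "M < 0" and support: "\<And>i. i < n \<Longrightarrow> c i \<bullet> w \<le> M"
    and "j < k"
  shows "d j \<bullet> w \<le> M"
proof -
  have "min (d j \<bullet> w) 0 \<le> M"
  proof (rule exp_growth_rate_le)
    show "u j > 0" using u_pos \<open>j < k\<close> .
    fix t :: real assume "t \<ge> 0"
    have "u j * exp (t * min (d j \<bullet> w) 0) \<le> 2 * (u j * softplus (d j \<bullet> (t *\<^sub>R w)))"
      using exp_min_le_two_softplus[of "t * (d j \<bullet> w)"] u_pos[OF \<open>j < k\<close>] \<open>t \<ge> 0\<close>
      by (simp add: min_mult_distrib_left)
    also have "\<dots> \<le> 2 * (\<Sum>j<k. u j * softplus (d j \<bullet> (t *\<^sub>R w)))"
      using \<open>j < k\<close> u_pos
      by (intro mult_left_mono member_le_sum) (auto intro!: less_imp_le[OF mult_pos_pos] softplus_pos)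
    also have "\<dots> \<le> 2 * (\<Delta> * (\<Sum>i<n. softplus (t * (c i \<bullet> w))))"
      using upper[of "t *\<^sub>R w"] by simp
    also have "\<dots> \<le> 2 * \<Delta> * real n * exp (t * M)"
      using sum_softplus_scaled_le[OF \<open>t \<ge> 0\<close>, of "{..<n}"] support \<open>\<Delta> \<ge> 0\<close>
      by (simp add: mult_left_mono)
    finally show "u j * exp (t * min (d j \<bullet> w) 0) \<le> 2 * \<Delta> * real n * exp (t * M)" .
  qed
  thus ?thesis using \<open>M < 0\<close> by linarith
qed

lemma coreset_point_reaches_support:
  fixes c d :: "nat \<Rightarrow> 'a::real_inner"
  assumes lower: "\<And>\<beta>. (\<Sum>i<n. softplus (c i \<bullet> \<beta>)) \<le> \<Delta> * (\<Sum>j<k. u j * softplus (d j \<bullet> \<beta>))"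
    and u_pos: "\<And>j. j < k \<Longrightarrow> u j > 0" and "\<Delta> \<ge> 0"
    and "M \<le> 0" and "i < n" and "c i \<bullet> w = M"
  shows "\<exists>j<k. M \<le> d j \<bullet> w"
proof -
  define a where "a = Max (insert (M - 1) ((\<lambda>j. d j \<bullet> w) ` {..<k}))"
  have below_a: "d j \<bullet> w \<le> a" if "j < k" for j
    unfolding a_def using that by (intro Max_ge) auto
  have "M \<le> a"
  proof (rule exp_growth_rate_le)
    fix t :: real assume "t \<ge> 0"
    have "1 * exp (t * M) \<le> 2 * softplus (c i \<bullet> (t *\<^sub>R w))"
      using exp_le_two_softplus[of "t * M"] \<open>t \<ge> 0\<close> \<open>M \<le> 0\<close> \<open>c i \<bullet> w = M\<close>
      by (simp add: mult_nonneg_nonpos)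
    also have "\<dots> \<le> 2 * (\<Sum>i<n. softplus (c i \<bullet> (t *\<^sub>R w)))"
      using \<open>i < n\<close> by (intro mult_left_mono member_le_sum) (auto intro: less_imp_le softplus_pos)
    also have "\<dots> \<le> 2 * \<Delta> * (\<Sum>j<k. u j * softplus (t * (d j \<bullet> w)))"
      using lower[of "t *\<^sub>R w"] by simp
    also have "\<dots> \<le> 2 * \<Delta> * (\<Sum>j<k. u j * exp (t * a))"
    proof (rule mult_left_mono[OF sum_mono])
      fix j assume "j \<in> {..<k}"
      hence "t * (d j \<bullet> w) \<le> t * a" using below_a \<open>t \<ge> 0\<close> by (simp add: mult_left_mono)
      hence "softplus (t * (d j \<bullet> w)) \<le> exp (t * a)"
        using softplus_le_exp[of "t * (d j \<bullet> w)"] by (meson exp_le_cancel_iff order_trans)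
      thus "u j * softplus (t * (d j \<bullet> w)) \<le> u j * exp (t * a)"
        using u_pos \<open>j \<in> {..<k}\<close> by (intro mult_left_mono) (auto intro: less_imp_le)
    qed (use \<open>\<Delta> \<ge> 0\<close> in auto)
    finally show "1 * exp (t * M) \<le> (2 * \<Delta> * (\<Sum>j<k. u j)) * exp (t * a)"
      by (simp add: sum_distrib_right mult.assoc)
  qed simp
  moreover have "a \<in> insert (M - 1) ((\<lambda>j. d j \<bullet> w) ` {..<k})"
    unfolding a_def by (intro Max_in) auto
  ultimately show ?thesis by auto
qed

lemma coreset_point_on_support:
  fixes c d :: "nat \<Rightarrow> 'a::real_inner"
  assumes lower: "\<And>\<beta>. (\<Sum>i<n. softplus (c i \<bullet> \<beta>)) \<le> \<Delta> * (\<Sum>j<k. u j * softplus (d j \<bullet> \<beta>))"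
    and upper: "\<And>\<beta>. (\<Sum>j<k. u j * softplus (d j \<bullet> \<beta>)) \<le> \<Delta> * (\<Sum>i<n. softplus (c i \<bullet> \<beta>))"
    and u_pos: "\<And>j. j < k \<Longrightarrow> u j > 0" and "\<Delta> \<ge> 0"
    and "M < 0" and support: "\<And>i. i < n \<Longrightarrow> c i \<bullet> w \<le> M" and "i < n" and "c i \<bullet> w = M"
  shows "\<exists>j<k. d j \<bullet> w = M"
proof -
  obtain j where "j < k" "M \<le> d j \<bullet> w"
    using coreset_point_reaches_support[OF lower u_pos \<open>\<Delta> \<ge> 0\<close> _ \<open>i < n\<close> \<open>c i \<bullet> w = M\<close>]
      \<open>M < 0\<close> by fastforce
  moreover have "d j \<bullet> w \<le> M"
    using coreset_point_below_support[OF upper u_pos \<open>\<Delta> \<ge> 0\<close> \<open>M < 0\<close> support \<open>j < k\<close>] .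
  ultimately show ?thesis by (intro exI[of _ j]) auto
qed

definition parabola_point :: "real \<Rightarrow> real^2" where
  "parabola_point a = vector [a, a\<^sup>2 + 1]"

definition support_direction :: "real \<Rightarrow> real^2" where
  "support_direction a = vector [2 * a, -1]"

lemma inner_vector_2: "(x::real^2) \<bullet> vector [p, q] = x$1 * p + x$2 * q"
  by (simp add: inner_vec_def sum_2)

lemma parabola_point_inner_support_direction:
  "parabola_point b \<bullet> support_direction a = a\<^sup>2 - 1 - (a - b)\<^sup>2"
  by (simp add: parabola_point_def support_direction_def inner_vector_2 power2_eq_square algebra_simps)

lemma supported_parameters_roots:
  "{a. x \<bullet> support_direction a = a\<^sup>2 - 1} = {a. poly [:x$2 - 1, - 2 * x$1, 1:] a = 0}"
  by (auto simp: support_direction_def inner_vector_2 power2_eq_square algebra_simps)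

lemma finite_supported_parameters: "finite {a. x \<bullet> support_direction a = a\<^sup>2 - 1}"
  unfolding supported_parameters_roots by (rule poly_roots_finite) simp

lemma card_supported_parameters_le: "card {a. x \<bullet> support_direction a = a\<^sup>2 - 1} \<le> 2"
proof -
  have "card {a. x \<bullet> support_direction a = a\<^sup>2 - 1} \<le> degree [:x$2 - 1, - 2 * x$1, 1:]"
    unfolding supported_parameters_roots by (rule card_poly_roots_bound) simp
  thus ?thesis by simp
qed

lemma parabola_coreset_size:
  assumes "is_coreset n (\<lambda>i. - parabola_point (real i / real n)) (\<lambda>_. 1) \<Delta> k C u"
  shows "n \<le> 2 * k"
proof -
  define a where "a l = real l / real n" for l
  define R where "R j = {b. C j \<bullet> support_direction b = b\<^sup>2 - 1}" for j
  have "\<Delta> \<ge> 1" and u_pos: "\<And>j. j < k \<Longrightarrow> u j > 0"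
    and lower: "\<And>\<beta>. (\<Sum>i<n. softplus (parabola_point (a i) \<bullet> \<beta>))
                     \<le> \<Delta> * (\<Sum>j<k. u j * softplus (C j \<bullet> \<beta>))"
    and upper: "\<And>\<beta>. (\<Sum>j<k. u j * softplus (C j \<bullet> \<beta>))
                     \<le> \<Delta> * (\<Sum>i<n. softplus (parabola_point (a i) \<bullet> \<beta>))"
    using assms by (auto simp: is_coreset_def logistic_loss_def weighted_loss_def softplus_def
        a_def divide_le_eq mult.commute)
  have covered: "\<exists>j<k. a l \<in> R j" if "l < n" for l
  proof -
    have "0 \<le> a l" "a l < 1" using \<open>l < n\<close> by (auto simp: a_def)
    hence "(a l)\<^sup>2 - 1 < 0" by (simp add: abs_square_less_1)
    thus ?thesis
      using coreset_point_on_support[OF lower upper u_pos, where i = l and w = "support_direction (a l)"]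
        \<open>l < n\<close> \<open>\<Delta> \<ge> 1\<close> by (auto simp: R_def parabola_point_inner_support_direction)
  qed
  hence "a ` {..<n} \<subseteq> (\<Union>j<k. R j)" by blast
  moreover have "inj_on a {..<n}"
    by (auto simp: inj_on_def a_def)
  ultimately have "n \<le> card (\<Union>j<k. R j)"
    by (metis card_image card_lessThan card_mono finite_UN_I finite_lessThan R_def
        finite_supported_parameters)
  also have "\<dots> \<le> (\<Sum>j<k. card (R j))"
    by (rule card_UN_le) simp
  also have "\<dots> \<le> 2 * k"
    using sum_mono[of "{..<k}" "\<lambda>j. card (R j)" "\<lambda>_. 2"]
    by (simp add: R_def card_supported_parameters_le)
  finally show ?thesis .
qed

theorem corollary3:
  shows "\<exists>c>0. \<forall>n::nat. \<exists>(Z::nat \<Rightarrow> real^2) (Y::nat \<Rightarrow> real).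
           (\<forall>i<n. Y i \<in> {-1, 1}) \<and>
           (\<forall>(\<Delta>::real) (k::nat) (C::nat \<Rightarrow> real^2) (u::nat \<Rightarrow> real).
              is_coreset n Z Y \<Delta> k C u \<longrightarrow> real k \<ge> c * real n / ln (real n))"
proof (intro exI[of _ "1/4"] conjI allI)
  fix n :: nat
  show "\<exists>Z Y. (\<forall>i<n. Y i \<in> {-1, 1}) \<and>
          (\<forall>\<Delta> k C u. is_coreset n Z Y \<Delta> k C u \<longrightarrow> real k \<ge> 1/4 * real n / ln (real n))"
  proof (intro exI[of _ "\<lambda>i. - parabola_point (real i / real n)"] exI[of _ "\<lambda>_. 1"] conjI allI impI)
    fix \<Delta> k C u
    assume "is_coreset n (\<lambda>i. - parabola_point (real i / real n)) (\<lambda>_. 1) \<Delta> k C u"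
    hence "real n \<le> 2 * real k" using parabola_coreset_size by fastforce
    show "real k \<ge> 1/4 * real n / ln (real n)"
    proof (cases "n \<le> 1")
      case True
      thus ?thesis by (cases n) auto
    next
      case False
      hence "ln 2 \<le> ln (real n)" by simp
      hence "1/2 \<le> ln (real n)" using ln2_ge_two_thirds by linarith
      hence "1/4 * real n / ln (real n) \<le> 1/4 * real n / (1/2)"
        by (intro divide_left_mono) auto
      thus ?thesis using \<open>real n \<le> 2 * real k\<close> by simp
    qed
  qed simp
qed simp

end
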